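(* Let $\Gamma$ be a graph of order $n$, size $m$, minimum degree $\delta$ and maximum degree $\Delta$. For every integer $k\in\{2-\delta,\dots,\delta\}$, $$\gamma_k^o(\Gamma)\ge\left\lceil\frac{(n+2\Delta+k)-\sqrt{(n+2\Delta+k)^2-4(2m+kn)}}{2}\right\rceil.$$
   Context: Graphs are finite and simple. For $S\subseteq V$ and $v\in V$, $\delta_S(v)$ is the number of neighbours of $v$ in $S$, $\overline{S}=V\setminus S$, and $\partial(S)$ the set of vertices of $\overline{S}$ with a neighbour in $S$. A nonempty $S$ is an offensive $k$-alliance if $\delta_S(v)\ge\delta_{\overline{S}}(v)+k$ for every $v\in\partial(S)$, and a global offensive $k$-alliance if moreover it is dominating; $\gamma_k^o(\Gamma)$ is the minimum cardinality of a global offensive $k$-alliance in $\Gamma$. *)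

theory Defs
  imports Complex_Main
begin

definition simple_graph :: "'a set \<Rightarrow> ('a \<Rightarrow> 'a \<Rightarrow> bool) \<Rightarrow> bool" where
  "simple_graph V E \<longleftrightarrow> finite V \<and> (\<forall>u v. E u v \<longrightarrow> u \<in> V \<and> v \<in> V)
     \<and> (\<forall>u v. E u v \<longrightarrow> E v u) \<and> (\<forall>v. \<not> E v v)"

definition deg_in :: "('a \<Rightarrow> 'a \<Rightarrow> bool) \<Rightarrow> 'a set \<Rightarrow> 'a \<Rightarrow> nat" where
  "deg_in E S v = card {u \<in> S. E v u}"

definition degree :: "'a set \<Rightarrow> ('a \<Rightarrow> 'a \<Rightarrow> bool) \<Rightarrow> 'a \<Rightarrow> nat" where
  "degree V E v = deg_in E V v"

definition min_degree :: "'a set \<Rightarrow> ('a \<Rightarrow> 'a \<Rightarrow> bool) \<Rightarrow> nat" where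
  "min_degree V E = Min (degree V E ` V)"

definition max_degree :: "'a set \<Rightarrow> ('a \<Rightarrow> 'a \<Rightarrow> bool) \<Rightarrow> nat" where
  "max_degree V E = Max (degree V E ` V)"

definition graph_size :: "('a \<Rightarrow> 'a \<Rightarrow> bool) \<Rightarrow> nat" where
  "graph_size E = card {{u, v} | u v. E u v}"

definition boundary :: "'a set \<Rightarrow> ('a \<Rightarrow> 'a \<Rightarrow> bool) \<Rightarrow> 'a set \<Rightarrow> 'a set" where
  "boundary V E S = {v \<in> V - S. \<exists>u \<in> S. E v u}"

definition offensive_alliance :: "'a set \<Rightarrow> ('a \<Rightarrow> 'a \<Rightarrow> bool) \<Rightarrow> int \<Rightarrow> 'a set \<Rightarrow> bool" where
  "offensive_alliance V E k S \<longleftrightarrow> S \<noteq> {} \<and> S \<subseteq> V \<and>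
     (\<forall>v \<in> boundary V E S. int (deg_in E S v) \<ge> int (deg_in E (V - S) v) + k)"

definition dominating :: "'a set \<Rightarrow> ('a \<Rightarrow> 'a \<Rightarrow> bool) \<Rightarrow> 'a set \<Rightarrow> bool" where
  "dominating V E S \<longleftrightarrow> S \<subseteq> V \<and> (\<forall>v \<in> V - S. \<exists>u \<in> S. E v u)"

definition global_offensive_alliance :: "'a set \<Rightarrow> ('a \<Rightarrow> 'a \<Rightarrow> bool) \<Rightarrow> int \<Rightarrow> 'a set \<Rightarrow> bool" where
  "global_offensive_alliance V E k S \<longleftrightarrow> offensive_alliance V E k S \<and> dominating V E S"

definition gamma_off :: "'a set \<Rightarrow> ('a \<Rightarrow> 'a \<Rightarrow> bool) \<Rightarrow> int \<Rightarrow> nat" where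
  "gamma_off V E k = Min {card S | S. global_offensive_alliance V E k S}"

end

theory Submission
  imports Defs
begin

text \<open>
  Let \<open>S\<close> be a global offensive \<open>k\<close>-alliance with \<open>s = |S|\<close> and let \<open>e\<close> count the edges
  between \<open>S\<close> and its complement. Every \<open>v \<notin> S\<close> lies on the boundary, so the alliance
  condition reads \<open>2 \<delta>\<^sub>S(v) \<ge> deg v + k\<close>; summing over \<open>v \<notin> S\<close> and using the handshake
  lemma gives \<open>2m + k(n - s) \<le> s\<Delta> + 2e\<close>. Bounding \<open>e\<close> once by \<open>s(n - s)\<close> and once by
  \<open>s\<Delta>\<close> yields \<open>s\<^sup>2 - (n + 2\<Delta> + k) s + (2m + kn) \<le> 0\<close>, so \<open>s\<close> is at least the smaller root.
\<close>

lemma sum_degree_eq_twice_graph_size: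
  assumes g: "simple_graph V E"
  shows "(\<Sum>v\<in>V. degree V E v) = 2 * graph_size E"
proof -
  have fin: "finite V" and inV: "\<And>u v. E u v \<Longrightarrow> u \<in> V \<and> v \<in> V"
    and sym: "\<And>u v. E u v \<Longrightarrow> E v u" and irr: "\<And>v. \<not> E v v"
    using g by (auto simp: simple_graph_def)
  define D where "D = Sigma V (\<lambda>v. {u\<in>V. E v u})"
  define f where "f = (\<lambda>(u::'a, v). {u, v})"
  have finD: "finite D" unfolding D_def using fin by auto
  have card_D: "card D = (\<Sum>v\<in>V. degree V E v)"
    unfolding D_def degree_def deg_in_def using fin by (simp add: card_SigmaI)
  have edges: "{{u, v} | u v. E u v} = f ` D"
    unfolding f_def D_def using inV by force
  have "card D = (\<Sum>y\<in>f ` D. card {x\<in>D. f x = y})"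
    using sum.image_gen[OF finD, of "\<lambda>_. 1::nat" f] by simp
  also have "\<dots> = (\<Sum>y\<in>f ` D. 2)"
  proof (rule sum.cong[OF refl])
    fix y assume "y \<in> f ` D"
    then obtain a b where ab: "(a, b) \<in> D" "y = {a, b}" unfolding f_def by auto
    then have "E a b" unfolding D_def by auto
    then have "{x\<in>D. f x = y} = {(a, b), (b, a)}" and "a \<noteq> b"
      using ab sym inV irr unfolding f_def D_def by (auto simp: doubleton_eq_iff)
    then show "card {x\<in>D. f x = y} = 2" by simp
  qed
  finally show ?thesis using card_D edges unfolding graph_size_def by simp
qed

lemma degree_split:
  assumes "finite V" and "S \<subseteq> V"
  shows "degree V E v = deg_in E S v + deg_in E (V - S) v"
proof -
  have "{u\<in>V. E v u} = {u\<in>S. E v u} \<union> {u\<in>V - S. E v u}" using assms(2) by auto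
  moreover have "card ({u\<in>S. E v u} \<union> {u\<in>V - S. E v u}) = card {u\<in>S. E v u} + card {u\<in>V - S. E v u}"
    using assms by (intro card_Un_disjoint) (auto intro: finite_subset)
  ultimately show ?thesis unfolding degree_def deg_in_def by simp
qed

lemma deg_in_le_card: "finite S \<Longrightarrow> deg_in E S v \<le> card S"
  unfolding deg_in_def by (rule card_mono) auto

lemma deg_in_le_max_degree:
  assumes "finite V" and "S \<subseteq> V" and "v \<in> V"
  shows "deg_in E S v \<le> max_degree V E"
proof -
  have "deg_in E S v \<le> degree V E v"
    unfolding deg_in_def degree_def using assms(1,2) by (intro card_mono) auto
  also have "\<dots> \<le> max_degree V E"
    unfolding max_degree_def using assms(1,3) by auto
  finally show ?thesis .
qed

lemma sum_deg_in_swap: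
  assumes "finite A" and "finite B" and sym: "\<And>u v. E u v \<Longrightarrow> E v u"
  shows "(\<Sum>v\<in>A. deg_in E B v) = (\<Sum>u\<in>B. deg_in E A u)"
proof -
  have "(\<Sum>v\<in>A. deg_in E B v) = (\<Sum>v\<in>A. \<Sum>u\<in>B. if E v u then 1 else 0)"
    unfolding deg_in_def using assms(2) by (simp add: sum.If_cases Collect_conj_eq Int_commute)
  also have "\<dots> = (\<Sum>u\<in>B. \<Sum>v\<in>A. if E u v then 1 else 0)"
    by (subst sum.swap) (intro sum.cong refl, metis sym)
  also have "\<dots> = (\<Sum>u\<in>B. deg_in E A u)"
    unfolding deg_in_def using assms(1) by (simp add: sum.If_cases Collect_conj_eq Int_commute)
  finally show ?thesis .
qed

lemma global_offensive_alliance_card_bound: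
  assumes g: "simple_graph V E" and ga: "global_offensive_alliance V E k S"
  shows "2 * int (graph_size E) + k * int (card (V - S))
     \<le> int (card S) * (2 * int (max_degree V E) + int (card (V - S)))"
proof -
  have fin: "finite V" and sym: "\<And>u v. E u v \<Longrightarrow> E v u"
    using g by (auto simp: simple_graph_def)
  have SV: "S \<subseteq> V" and dom: "\<And>v. v \<in> V - S \<Longrightarrow> \<exists>u\<in>S. E v u"
    and off: "\<And>v. v \<in> boundary V E S \<Longrightarrow> int (deg_in E S v) \<ge> int (deg_in E (V - S) v) + k"
    using ga by (auto simp: global_offensive_alliance_def offensive_alliance_def dominating_def)
  have finS: "finite S" using SV fin finite_subset by blast
  define s where "s = card S"
  define \<Delta> where "\<Delta> = max_degree V E"
  define e where "e = (\<Sum>v\<in>V - S. deg_in E S v)"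
  have "int (degree V E v) + k \<le> 2 * int (deg_in E S v)" if "v \<in> V - S" for v
  proof -
    have "v \<in> boundary V E S" using dom[OF that] that unfolding boundary_def by auto
    from off[OF this] show ?thesis using degree_split[OF fin SV, of E v] by simp
  qed
  then have outside: "(\<Sum>v\<in>V - S. int (degree V E v)) + k * int (card (V - S)) \<le> 2 * int e"
    using sum_mono[of "V - S" "\<lambda>v. int (degree V E v) + k" "\<lambda>v. 2 * int (deg_in E S v)"]
    by (simp add: e_def sum.distrib sum_distrib_left of_nat_sum mult.commute)
  have inside: "(\<Sum>v\<in>S. degree V E v) \<le> s * \<Delta>"
    using sum_mono[of S "degree V E" "\<lambda>_. \<Delta>"] deg_in_le_max_degree[OF fin subset_refl]
      SV unfolding s_def \<Delta>_def degree_def by auto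
  have e_le_cut: "e \<le> s * card (V - S)"
    using sum_mono[of "V - S" "deg_in E S" "\<lambda>_. s"] deg_in_le_card[OF finS]
    unfolding e_def s_def by (auto simp: mult.commute)
  have "e = (\<Sum>u\<in>S. deg_in E (V - S) u)"
    unfolding e_def using fin finS sym by (intro sum_deg_in_swap) auto
  also have "\<dots> \<le> s * \<Delta>"
    using sum_mono[of S "deg_in E (V - S)" "\<lambda>_. \<Delta>"] deg_in_le_max_degree[OF fin Diff_subset] SV
    unfolding s_def \<Delta>_def by auto
  finally have e_le_max: "e \<le> s * \<Delta>" .
  have "2 * graph_size E = (\<Sum>v\<in>S. degree V E v) + (\<Sum>v\<in>V - S. degree V E v)"
    using sum_degree_eq_twice_graph_size[OF g] sum.subset_diff[OF SV fin, of "degree V E"] by simp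
  then have "2 * int (graph_size E) = int (\<Sum>v\<in>S. degree V E v) + (\<Sum>v\<in>V - S. int (degree V E v))"
    by (metis of_nat_add of_nat_mult of_nat_numeral of_nat_sum)
  moreover have "int (\<Sum>v\<in>S. degree V E v) \<le> int s * int \<Delta>"
    using inside by (metis of_nat_le_iff of_nat_mult)
  moreover have "int e \<le> int s * int (card (V - S))" and "int e \<le> int s * int \<Delta>"
    using e_le_cut e_le_max by (metis of_nat_le_iff of_nat_mult)+
  ultimately have "2 * int (graph_size E) + k * int (card (V - S))
      \<le> 2 * (int s * int \<Delta>) + int s * int (card (V - S))"
    using outside by linarith
  then show ?thesis unfolding s_def \<Delta>_def by (simp add: algebra_simps)
qed

lemma ge_smaller_root_if_quadratic_nonpos:
  fixes b c s :: real
  assumes "s\<^sup>2 - b * s + c \<le> 0"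
  shows "(b - sqrt (b\<^sup>2 - 4 * c)) / 2 \<le> s"
proof -
  have "(b - 2 * s)\<^sup>2 \<le> b\<^sup>2 - 4 * c" using assms by (simp add: power2_eq_square algebra_simps)
  then have "\<bar>b - 2 * s\<bar> \<le> sqrt (b\<^sup>2 - 4 * c)" using real_sqrt_le_mono by fastforce
  then show ?thesis by (simp add: abs_le_iff field_simps)
qed

lemma global_offensive_alliance_vertex_set:
  "V \<noteq> {} \<Longrightarrow> global_offensive_alliance V E k V"
  unfolding global_offensive_alliance_def offensive_alliance_def dominating_def boundary_def
  by auto

lemma gamma_off_attained:
  assumes "finite V" and "V \<noteq> {}"
  obtains S where "global_offensive_alliance V E k S" and "gamma_off V E k = card S"
proof -
  let ?A = "{card S | S. global_offensive_alliance V E k S}"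
  have "?A \<noteq> {}" using global_offensive_alliance_vertex_set[OF assms(2)] by auto
  moreover have "?A \<subseteq> {0..card V}"
    using assms(1) by (auto simp: global_offensive_alliance_def offensive_alliance_def intro: card_mono)
  then have "finite ?A" using finite_subset by blast
  ultimately have "gamma_off V E k \<in> ?A" unfolding gamma_off_def by (rule Min_in[rotated])
  then show ?thesis using that by auto
qed

theorem mainTheorem17:
  fixes V :: "'a set" and E :: "'a \<Rightarrow> 'a \<Rightarrow> bool" and k :: int
  assumes "simple_graph V E" and "V \<noteq> {}"
    and "2 - int (min_degree V E) \<le> k" and "k \<le> int (min_degree V E)"
  shows "int (gamma_off V E k) \<ge>
    (let n = real (card V); m = real (graph_size E); \<Delta> = real (max_degree V E) in
      \<lceil>((n + 2 * \<Delta> + k) - sqrt ((n + 2 * \<Delta> + k)^2 - 4 * (2 * m + k * n))) / 2\<rceil>)"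
proof -
  have fin: "finite V" using assms(1) by (simp add: simple_graph_def)
  obtain S where S: "global_offensive_alliance V E k S" "gamma_off V E k = card S"
    using gamma_off_attained[OF fin assms(2)] .
  have "S \<subseteq> V" using S(1) by (simp add: global_offensive_alliance_def offensive_alliance_def)
  then have "card (V - S) = card V - card S" and "card S \<le> card V"
    using fin by (auto simp: card_Diff_subset finite_subset card_mono)
  moreover have "real_of_int (2 * int (graph_size E) + k * int (card (V - S)))
      \<le> real_of_int (int (card S) * (2 * int (max_degree V E) + int (card (V - S))))"
    using global_offensive_alliance_card_bound[OF assms(1) S(1)] by (simp only: of_int_le_iff)
  ultimately have "2 * real (graph_size E) + k * (real (card V) - card S)
      \<le> card S * (2 * real (max_degree V E) + (real (card V) - card S))"
    by (simp add: of_nat_diff)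
  then have "(card V + 2 * real (max_degree V E) + k
      - sqrt ((card V + 2 * real (max_degree V E) + k)\<^sup>2 - 4 * (2 * real (graph_size E) + k * card V))) / 2
      \<le> card S"
    by (intro ge_smaller_root_if_quadratic_nonpos) (simp add: power2_eq_square algebra_simps)
  then show ?thesis unfolding Let_def S(2) by (simp add: ceiling_le_iff)
qed

end
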